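(* Let $L\ge2$ and let $\mathcal H_1^L$ be the complete 1-constituent CCRN of length $L$ and order two. Then its number of complexes is $|\mathcal C_L|=\frac{(L+1)(L+2)}{2}-4$, its number of linkage classes is $\ell=2L-3$, the dimension of its stoichiometric subspace is $s=L-1$, and its deficiency is $\delta=|\mathcal C_L|-\ell-s=\frac{(L-1)(L-2)}{2}$.
   Context: The complete 1-constituent CCRN of length $L$ and order two has species set $\{\bar1,\dots,\bar L\}$ (cluster $\bar n$ has size $n$). A complex is a multiset of one or two species, written $\bar a$ or $\bar a+\bar b$, with size $a$, resp. $a+b$. The reaction set consists of all reactions $y\to y'$ between two distinct complexes $y\ne y'$ of width at most two having the same size (i.e. all $\bar a+\bar b\to\bar c+\bar d$ and $\bar a+\bar b\rightleftharpoons\bar c$ etc. with $a+b=c+d$, resp. $a+b=c$), so every reaction is reversible. The complex set $\mathcal C_L$ consists of the complexes that occur as input or output of at least one reaction. Linkage classes are the connected components of the (undirected) graph with vertex set $\mathcal C_L$ and an edge for each reaction. Each reaction $y\to y'$ has reaction vector $y'-y\in\mathbb Z^L$ (counting species multiplicities), the stoichiometric subspace is the span of all reaction vectors, $s$ is its dimension, and the deficiency is $\delta=|\mathcal C_L|-\ell-s$. *)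

theory Defs
  imports Complex_Main "HOL-Library.Multiset" "HOL-Library.Function_Algebras"
begin

text \<open>Complexes are multisets of species; species are the cluster sizes 1..L.
  Width at most two (one or two species).\<close>

definition cplx_size :: "nat multiset \<Rightarrow> nat" where
  "cplx_size y = sum_mset y"

definition width_le2_complexes :: "nat \<Rightarrow> nat multiset set" where
  "width_le2_complexes L =
     {y. set_mset y \<subseteq> {1..L} \<and> (size y = 1 \<or> size y = 2)}"

definition ccrn_reactions :: "nat \<Rightarrow> (nat multiset \<times> nat multiset) set" where
  "ccrn_reactions L =
     {(y, y'). y \<in> width_le2_complexes L \<and> y' \<in> width_le2_complexes L \<and>
               y \<noteq> y' \<and> cplx_size y = cplx_size y'}"

definition ccrn_complexes :: "nat \<Rightarrow> nat multiset set" where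
  "ccrn_complexes L = {y. \<exists>y'. (y, y') \<in> ccrn_reactions L \<or> (y', y) \<in> ccrn_reactions L}"

definition ccrn_linkage_classes :: "nat \<Rightarrow> nat multiset set set" where
  "ccrn_linkage_classes L =
     ccrn_complexes L // ((ccrn_reactions L \<union> (ccrn_reactions L)\<inverse>)\<^sup>*)"

text \<open>Reaction vector y' - y in R^L (species indexed by 1..L, as a function nat => real).\<close>
definition reaction_vector :: "nat multiset \<Rightarrow> nat multiset \<Rightarrow> (nat \<Rightarrow> real)" where
  "reaction_vector y y' = (\<lambda>i. real (count y' i) - real (count y i))"

definition fscale :: "real \<Rightarrow> (nat \<Rightarrow> real) \<Rightarrow> (nat \<Rightarrow> real)" where
  "fscale c f = (\<lambda>i. c * f i)"

definition ccrn_stoich_dim :: "nat \<Rightarrow> nat" where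
  "ccrn_stoich_dim L =
     vector_space.dim fscale ((\<lambda>(y, y'). reaction_vector y y') ` ccrn_reactions L)"

definition ccrn_deficiency :: "nat \<Rightarrow> int" where
  "ccrn_deficiency L = int (card (ccrn_complexes L)) - int (card (ccrn_linkage_classes L))
                        - int (ccrn_stoich_dim L)"

end

theory Submission
  imports Defs
begin

text \<open>A complex of width at most two is a singleton or an unordered pair from \<open>{1..L}\<close>, and two
  distinct such complexes react iff they have the same size, so "reacting or equal" is already
  transitive and the linkage classes are exactly the size fibres. The sizes \<open>1\<close>, \<open>2L-1\<close>, \<open>2L\<close>
  are each carried by a single complex, hence by no reaction; every size in \<open>{2..2L-2}\<close> is carried
  by at least two. This gives \<open>L + L(L+1)/2 - 3\<close> complexes in \<open>2L-3\<close> linkage classes.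
  Writing \<open>e\<^sub>k\<close> for the unit vectors, a complex \<open>y\<close> of size \<open>n\<close> satisfies
  \<open>y - n e\<^sub>1 \<in> span {e\<^sub>k - e\<^sub>1 - e\<^sub>k\<^sub>-\<^sub>1 | 2 \<le> k \<le> L}\<close>, so these \<open>L-1\<close> reaction vectors, which are
  triangular and hence independent, form a basis of the stoichiometric subspace.\<close>

section \<open>Complexes of width at most two\<close>

lemma add_mset_pair_eq_iff:
  "{#a, b#} = {#c, d#} \<longleftrightarrow> (a = c \<and> b = d) \<or> (a = d \<and> b = c)"
  by (auto simp: add_eq_conv_diff)

lemma cplx_size_single [simp]: "cplx_size {#a#} = a"
  by (simp add: cplx_size_def)

lemma cplx_size_pair [simp]: "cplx_size {#a, b#} = a + b"
  by (simp add: cplx_size_def)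

lemma size_2_pair_mset:
  assumes "size y = 2"
  obtains a b where "y = {#a, b#}" "a \<le> (b :: 'a :: linorder)"
proof -
  obtain a b where ab: "y = {#a, b#}"
    using assms
    by (metis numeral_2_eq_2 size_eq_Suc_imp_eq_union size_eq_0_iff_empty Suc_inject size_add_mset)
  show ?thesis
  proof (cases "a \<le> b")
    case True
    then show ?thesis using that ab by blast
  next
    case False
    then show ?thesis using that[of b a] ab by (simp add: add_mset_commute)
  qed
qed

lemma width_le2_complexes_iff:
  "y \<in> width_le2_complexes L \<longleftrightarrow>
     (\<exists>a. 1 \<le> a \<and> a \<le> L \<and> y = {#a#}) \<or> (\<exists>a b. 1 \<le> a \<and> a \<le> b \<and> b \<le> L \<and> y = {#a, b#})"
proof
  assume "y \<in> width_le2_complexes L"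
  then have range: "set_mset y \<subseteq> {1..L}" and "size y = 1 \<or> size y = 2"
    by (auto simp: width_le2_complexes_def)
  then consider a where "y = {#a#}" | a b where "y = {#a, b#}" "a \<le> b"
    using size_1_singleton_mset size_2_pair_mset by metis
  then show "(\<exists>a. 1 \<le> a \<and> a \<le> L \<and> y = {#a#}) \<or> (\<exists>a b. 1 \<le> a \<and> a \<le> b \<and> b \<le> L \<and> y = {#a, b#})"
    by cases (use range in auto)
qed (auto simp: width_le2_complexes_def)

lemma cplx_size_width_le2:
  "y \<in> width_le2_complexes L \<Longrightarrow> cplx_size y \<in> {1..2 * L}"
  by (auto simp: width_le2_complexes_iff)

definition ordered_pairs :: "nat \<Rightarrow> (nat \<times> nat) set" where
  "ordered_pairs L = {(a, b). 1 \<le> a \<and> a \<le> b \<and> b \<le> L}"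

lemma finite_ordered_pairs: "finite (ordered_pairs L)"
  by (rule finite_subset[of _ "{1..L} \<times> {1..L}"]) (auto simp: ordered_pairs_def)

lemma card_ordered_pairs: "card (ordered_pairs L) = L * (L + 1) div 2"
proof (induction L)
  case 0
  have "ordered_pairs 0 = {}"
    by (auto simp: ordered_pairs_def)
  then show ?case by simp
next
  case (Suc L)
  have "ordered_pairs (Suc L) = ordered_pairs L \<union> (\<lambda>a. (a, Suc L)) ` {1..Suc L}"
    by (auto simp: ordered_pairs_def)
  moreover have "ordered_pairs L \<inter> (\<lambda>a. (a, Suc L)) ` {1..Suc L} = {}"
    by (auto simp: ordered_pairs_def)
  moreover have "card ((\<lambda>a. (a, Suc L)) ` {1..Suc L}) = Suc L"
    by (subst card_image) (auto simp: inj_on_def)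
  ultimately show ?case
    using Suc finite_ordered_pairs[of L] by (simp add: card_Un_disjoint)
qed

lemma width_le2_complexes_eq:
  "width_le2_complexes L = (\<lambda>a. {#a#}) ` {1..L} \<union> (\<lambda>(a, b). {#a, b#}) ` ordered_pairs L"
  unfolding set_eq_iff width_le2_complexes_iff ordered_pairs_def Un_iff image_iff by fastforce

lemma finite_width_le2_complexes: "finite (width_le2_complexes L)"
  using finite_ordered_pairs by (simp add: width_le2_complexes_eq)

lemma card_width_le2_complexes: "card (width_le2_complexes L) = L + L * (L + 1) div 2"
proof -
  have "card ((\<lambda>(a, b). {#a, b#}) ` ordered_pairs L) = card (ordered_pairs L)"
    by (rule card_image) (auto simp: inj_on_def ordered_pairs_def add_mset_pair_eq_iff)
  moreover have "card ((\<lambda>a. {#a#}) ` {1..L}) = L"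
    by (subst card_image) (auto simp: inj_on_def)
  ultimately show ?thesis
    unfolding width_le2_complexes_eq
    by (subst card_Un_disjoint) (auto simp: finite_ordered_pairs card_ordered_pairs)
qed

section \<open>Complexes grouped by size\<close>

definition complexes_of_size :: "nat \<Rightarrow> nat \<Rightarrow> nat multiset set" where
  "complexes_of_size L n = {y \<in> width_le2_complexes L. cplx_size y = n}"

lemma complexes_of_size_1: "L \<ge> 1 \<Longrightarrow> complexes_of_size L 1 = {{#1#}}"
  by (auto simp: complexes_of_size_def width_le2_complexes_iff)

lemma complexes_of_size_2L: "L \<ge> 1 \<Longrightarrow> complexes_of_size L (2 * L) = {{#L, L#}}"
  by (auto simp: complexes_of_size_def width_le2_complexes_iff
      intro!: arg_cong2[where f = "\<lambda>a b. {#a, b#}"])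

lemma complexes_of_size_2L_minus_1:
  assumes "L \<ge> 2"
  shows "complexes_of_size L (2 * L - 1) = {{#L - 1, L#}}"
proof -
  have "y = {#L - 1, L#}" if "y \<in> complexes_of_size L (2 * L - 1)" for y
    using that assms by (auto simp: complexes_of_size_def width_le2_complexes_iff
        intro!: arg_cong2[where f = "\<lambda>a b. {#a, b#}"])
  then show ?thesis
    using assms by (auto simp: complexes_of_size_def width_le2_complexes_def)
qed

lemma two_complexes_of_size:
  assumes "2 \<le> n" "n \<le> 2 * L - 2"
  obtains y y' where "y \<in> complexes_of_size L n" "y' \<in> complexes_of_size L n" "y \<noteq> y'"
proof (cases "n \<le> L")
  case True
  show ?thesis
    by (rule that[of "{#n#}" "{#1, n - 1#}"])
       (use assms True in \<open>auto simp: complexes_of_size_def width_le2_complexes_def\<close>)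
next
  case False
  show ?thesis
    by (rule that[of "{#n - L, L#}" "{#n - L + 1, L - 1#}"])
       (use assms False in \<open>auto simp: complexes_of_size_def width_le2_complexes_def
          add_mset_pair_eq_iff\<close>)
qed

lemma cplx_size_extreme_iff:
  assumes "L \<ge> 2" "y \<in> width_le2_complexes L"
  shows "cplx_size y \<notin> {2..2 * L - 2} \<longleftrightarrow> y \<in> {{#1#}, {#L - 1, L#}, {#L, L#}}"
proof
  assume "cplx_size y \<notin> {2..2 * L - 2}"
  then have "cplx_size y \<in> {1, 2 * L - 1, 2 * L}"
    using cplx_size_width_le2[OF assms(2)] by auto
  moreover have "y \<in> complexes_of_size L (cplx_size y)"
    using assms(2) by (simp add: complexes_of_size_def)
  ultimately show "y \<in> {{#1#}, {#L - 1, L#}, {#L, L#}}"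
    using assms(1) complexes_of_size_1 complexes_of_size_2L complexes_of_size_2L_minus_1 by auto
qed (use assms(1) in auto)

lemma ccrn_complexes_iff:
  assumes "L \<ge> 2"
  shows "y \<in> ccrn_complexes L \<longleftrightarrow> y \<in> width_le2_complexes L \<and> cplx_size y \<in> {2..2 * L - 2}"
proof -
  have "y \<in> ccrn_complexes L \<longleftrightarrow> y \<in> width_le2_complexes L \<and>
      (\<exists>y' \<in> width_le2_complexes L. y' \<noteq> y \<and> cplx_size y' = cplx_size y)"
    by (auto simp: ccrn_complexes_def ccrn_reactions_def)
  moreover have "(\<exists>y' \<in> width_le2_complexes L. y' \<noteq> y \<and> cplx_size y' = cplx_size y)
      \<longleftrightarrow> cplx_size y \<in> {2..2 * L - 2}" if "y \<in> width_le2_complexes L"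
  proof
    assume "\<exists>y' \<in> width_le2_complexes L. y' \<noteq> y \<and> cplx_size y' = cplx_size y"
    then obtain y' where "y' \<in> width_le2_complexes L" "y' \<noteq> y" "cplx_size y' = cplx_size y"
      by blast
    then show "cplx_size y \<in> {2..2 * L - 2}"
      using cplx_size_extreme_iff[OF assms that] cplx_size_extreme_iff[OF assms, of y'] assms
      by auto
  next
    assume "cplx_size y \<in> {2..2 * L - 2}"
    then obtain y1 y2 where "y1 \<in> complexes_of_size L (cplx_size y)"
      "y2 \<in> complexes_of_size L (cplx_size y)" "y1 \<noteq> y2"
      using two_complexes_of_size[of "cplx_size y" L] by auto
    then show "\<exists>y' \<in> width_le2_complexes L. y' \<noteq> y \<and> cplx_size y' = cplx_size y"
      by (metis (mono_tags, lifting) complexes_of_size_def mem_Collect_eq)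
  qed
  ultimately show ?thesis
    by blast
qed

lemma ccrn_complexes_eq:
  assumes "L \<ge> 2"
  shows "ccrn_complexes L = width_le2_complexes L - {{#1#}, {#L - 1, L#}, {#L, L#}}"
  using cplx_size_extreme_iff[OF assms] by (auto simp: ccrn_complexes_iff[OF assms])

lemma card_ccrn_complexes:
  assumes "L \<ge> 2"
  shows "card (ccrn_complexes L) = L + L * (L + 1) div 2 - 3"
proof -
  have "{{#1#}, {#L - 1, L#}, {#L, L#}} \<subseteq> width_le2_complexes L"
    using assms by (auto simp: width_le2_complexes_def)
  moreover have "card {{#1#}, {#L - 1, L#}, {#L, L#}} = 3"
    using assms by (auto simp: add_mset_pair_eq_iff)
  ultimately show ?thesis
    using assms by (simp add: ccrn_complexes_eq card_Diff_subset finite_subset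
        finite_width_le2_complexes card_width_le2_complexes)
qed

lemma cplx_size_ccrn_complexes:
  assumes "L \<ge> 2"
  shows "cplx_size ` ccrn_complexes L = {2..2 * L - 2}"
proof -
  have "n \<in> cplx_size ` ccrn_complexes L" if "n \<in> {2..2 * L - 2}" for n
  proof -
    obtain y where "y \<in> complexes_of_size L n"
      using two_complexes_of_size[of n L] \<open>n \<in> {2..2 * L - 2}\<close> by auto
    then show ?thesis
      using that assms by (force simp: complexes_of_size_def ccrn_complexes_iff)
  qed
  then show ?thesis
    using assms by (auto simp: ccrn_complexes_iff)
qed

section \<open>Linkage classes\<close>

lemma ccrn_reactions_converse: "(ccrn_reactions L)\<inverse> = ccrn_reactions L"
  by (auto simp: ccrn_reactions_def)

lemma rtrancl_ccrn_reactions: "(ccrn_reactions L)\<^sup>* = (ccrn_reactions L)\<^sup>="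
proof (intro equalityI subrelI)
  fix x y assume "(x, y) \<in> (ccrn_reactions L)\<^sup>*"
  then show "(x, y) \<in> (ccrn_reactions L)\<^sup>="
    by (induction rule: rtrancl_induct) (auto simp: ccrn_reactions_def)
qed auto

lemma linkage_class_eq:
  assumes "L \<ge> 2" "x \<in> ccrn_complexes L"
  shows "(ccrn_reactions L)\<^sup>* `` {x} = complexes_of_size L (cplx_size x)"
  using assms(2) unfolding rtrancl_ccrn_reactions ccrn_complexes_iff[OF assms(1)]
  by (auto simp: ccrn_reactions_def complexes_of_size_def)

lemma ccrn_linkage_classes_eq:
  assumes "L \<ge> 2"
  shows "ccrn_linkage_classes L = complexes_of_size L ` {2..2 * L - 2}"
proof -
  have "ccrn_linkage_classes L = (\<lambda>x. complexes_of_size L (cplx_size x)) ` ccrn_complexes L"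
    unfolding ccrn_linkage_classes_def ccrn_reactions_converse Un_absorb quotient_def
    by (auto simp: linkage_class_eq[OF assms])
  also have "\<dots> = complexes_of_size L ` cplx_size ` ccrn_complexes L"
    by (simp add: image_image)
  finally show ?thesis
    by (simp add: cplx_size_ccrn_complexes[OF assms])
qed

lemma card_ccrn_linkage_classes:
  assumes "L \<ge> 2"
  shows "card (ccrn_linkage_classes L) = 2 * L - 3"
proof -
  have "inj_on (complexes_of_size L) {2..2 * L - 2}"
  proof (rule inj_onI)
    fix m n assume "m \<in> {2..2 * L - 2}" and eq: "complexes_of_size L m = complexes_of_size L n"
    then obtain y where "y \<in> complexes_of_size L m"
      using two_complexes_of_size[of m L] by auto
    then show "m = n"
      using eq by (auto simp: complexes_of_size_def)
  qed
  then show ?thesis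
    using assms by (simp add: ccrn_linkage_classes_eq card_image)
qed

section \<open>The stoichiometric subspace\<close>

interpretation fun_vs: vector_space fscale
  by unfold_locales (auto simp: fscale_def fun_eq_iff algebra_simps)

lemma sum_fun_apply: "(\<Sum>w\<in>A. f w) i = (\<Sum>w\<in>A. (f w :: nat \<Rightarrow> real) i)"
  by (induction A rule: infinite_finite_induct) auto

text \<open>Evaluate the combination at the largest index with a nonzero coefficient.\<close>

lemma triangular_combination_zero:
  assumes "finite K"
    and diag: "\<And>k. k \<in> K \<Longrightarrow> v k k \<noteq> 0"
    and upper: "\<And>j k. j \<in> K \<Longrightarrow> k \<in> K \<Longrightarrow> j < k \<Longrightarrow> v j k = 0"
    and comb: "(\<Sum>k\<in>K. fscale (c k) (v k)) = 0"
  shows "\<forall>k\<in>K. c k = 0"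
proof (rule ccontr)
  define T where "T = {k \<in> K. c k \<noteq> 0}"
  assume "\<not> (\<forall>k\<in>K. c k = 0)"
  then have "T \<noteq> {}" "finite T"
    using \<open>finite K\<close> by (auto simp: T_def)
  define m where "m = Max T"
  have m: "m \<in> T" "\<And>k. k \<in> T \<Longrightarrow> k \<le> m"
    using \<open>T \<noteq> {}\<close> \<open>finite T\<close> by (simp_all add: m_def)
  have "(\<Sum>k\<in>K. fscale (c k) (v k)) m = (\<Sum>k\<in>K. c k * v k m)"
    by (simp add: sum_fun_apply fscale_def)
  also have "\<dots> = c m * v m m + (\<Sum>k\<in>K - {m}. c k * v k m)"
    using m \<open>finite K\<close> by (intro sum.remove) (auto simp: T_def)
  also have "(\<Sum>k\<in>K - {m}. c k * v k m) = 0"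
  proof (rule sum.neutral, rule ballI)
    fix k assume k: "k \<in> K - {m}"
    show "c k * v k m = 0"
    proof (cases "c k = 0")
      case False
      then have "k < m"
        using k m(2)[of k] by (auto simp: T_def)
      then show ?thesis
        using k m(1) upper[of k m] by (simp add: T_def)
    qed simp
  qed
  finally show False
    using comb m diag[of m] by (simp add: T_def)
qed

lemma triangular_independent:
  assumes "finite K"
    and diag: "\<And>k. k \<in> K \<Longrightarrow> v k k \<noteq> 0"
    and upper: "\<And>j k. j \<in> K \<Longrightarrow> k \<in> K \<Longrightarrow> j < k \<Longrightarrow> v j k = 0"
  shows "inj_on v K" and "fun_vs.independent (v ` K)"
proof -
  show inj: "inj_on v K"
  proof (rule inj_onI)
    fix j k assume "j \<in> K" "k \<in> K" "v j = v k"
    then show "j = k"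
      using diag upper by (metis linorder_neqE_nat)
  qed
  show "fun_vs.independent (v ` K)"
  proof
    assume "fun_vs.dependent (v ` K)"
    then obtain u where "\<exists>w \<in> v ` K. u w \<noteq> 0" "(\<Sum>w\<in>v ` K. fscale (u w) w) = 0"
      using \<open>finite K\<close> by (auto simp: fun_vs.dependent_finite)
    moreover have "(\<Sum>w\<in>v ` K. fscale (u w) w) = (\<Sum>k\<in>K. fscale (u (v k)) (v k))"
      using inj by (rule sum.reindex_cong) simp_all
    ultimately show False
      using triangular_combination_zero[of K v "\<lambda>k. u (v k)", OF assms] by auto
  qed
qed

definition count_vector :: "nat multiset \<Rightarrow> nat \<Rightarrow> real" where
  "count_vector y = (\<lambda>i. real (count y i))"

lemma reaction_vector_eq: "reaction_vector y y' = count_vector y' - count_vector y"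
  by (simp add: reaction_vector_def count_vector_def fun_eq_iff)

lemma count_vector_pair: "count_vector {#a, b#} = count_vector {#a#} + count_vector {#b#}"
  by (simp add: count_vector_def fun_eq_iff)

definition fusion_vector :: "nat \<Rightarrow> nat \<Rightarrow> real" where
  "fusion_vector k = reaction_vector {#1, k - 1#} {#k#}"

lemma fusion_vector_apply:
  "2 \<le> k \<Longrightarrow> fusion_vector k i =
     (if i = k then 1 else 0) - (if i = 1 then 1 else 0) - (if i = k - 1 then 1 else 0)"
  by (simp add: fusion_vector_def reaction_vector_def)

lemma fusion_vectors_independent:
  shows "inj_on fusion_vector {2..L}" and "fun_vs.independent (fusion_vector ` {2..L})"
proof -
  have "fusion_vector k k \<noteq> 0" if "k \<in> {2..L}" for k
  proof -
    have "k - 1 \<noteq> k"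
      using that by auto
    then show ?thesis
      using that by (simp add: fusion_vector_apply)
  qed
  moreover have "fusion_vector j k = 0" if "j \<in> {2..L}" "k \<in> {2..L}" "j < k" for j k
    using that by (simp add: fusion_vector_apply)
  ultimately show "inj_on fusion_vector {2..L}" and "fun_vs.independent (fusion_vector ` {2..L})"
    using triangular_independent[of "{2..L}" fusion_vector] by simp_all
qed

lemma count_vector_single_in_span:
  assumes "1 \<le> a" "a \<le> L"
  shows "count_vector {#a#} - fscale (real a) (count_vector {#1#})
           \<in> fun_vs.span (fusion_vector ` {2..L})"
  using assms
proof (induction a rule: nat_induct_at_least)
  case base
  have "count_vector {#1#} - fscale (real 1) (count_vector {#1#}) = 0"
    by (simp add: fscale_def fun_eq_iff)
  then show ?case
    by (metis fun_vs.span_zero)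
next
  case (Suc a)
  have "count_vector {#Suc a#} - fscale (real (Suc a)) (count_vector {#1#}) =
        fusion_vector (Suc a) + (count_vector {#a#} - fscale (real a) (count_vector {#1#}))"
    by (auto simp: count_vector_def fusion_vector_def reaction_vector_def fscale_def fun_eq_iff)
  moreover have "fusion_vector (Suc a) \<in> fun_vs.span (fusion_vector ` {2..L})"
    using Suc by (intro fun_vs.span_base) auto
  moreover have "count_vector {#a#} - fscale (real a) (count_vector {#1#})
      \<in> fun_vs.span (fusion_vector ` {2..L})"
    using Suc.IH Suc.prems by (meson Suc_leD)
  ultimately show ?case
    by (metis fun_vs.span_add)
qed

lemma count_vector_in_span:
  assumes "y \<in> width_le2_complexes L"
  shows "count_vector y - fscale (real (cplx_size y)) (count_vector {#1#})
           \<in> fun_vs.span (fusion_vector ` {2..L})"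
  using assms unfolding width_le2_complexes_iff
proof (elim disjE exE conjE)
  fix a b assume ab: "1 \<le> a" "a \<le> b" "b \<le> L" "y = {#a, b#}"
  then have "count_vector y - fscale (real (cplx_size y)) (count_vector {#1#}) =
      (count_vector {#a#} - fscale (real a) (count_vector {#1#})) +
      (count_vector {#b#} - fscale (real b) (count_vector {#1#}))"
    by (simp add: count_vector_pair fscale_def fun_eq_iff algebra_simps)
  then show ?thesis
    using ab count_vector_single_in_span[of a L] count_vector_single_in_span[of b L]
    by (simp add: fun_vs.span_add)
next
  fix a assume "1 \<le> a" "a \<le> L" "y = {#a#}"
  then show ?thesis
    using count_vector_single_in_span[of a L] by simp
qed

lemma ccrn_stoich_dim_eq:
  assumes "L \<ge> 2"
  shows "ccrn_stoich_dim L = L - 1"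
  unfolding ccrn_stoich_dim_def
proof (rule fun_vs.dim_unique[of "fusion_vector ` {2..L}"])
  show "fusion_vector ` {2..L} \<subseteq> (\<lambda>(y, y'). reaction_vector y y') ` ccrn_reactions L"
    by (force simp: fusion_vector_def ccrn_reactions_def width_le2_complexes_def)
  show "(\<lambda>(y, y'). reaction_vector y y') ` ccrn_reactions L \<subseteq> fun_vs.span (fusion_vector ` {2..L})"
  proof clarify
    fix y y' assume "(y, y') \<in> ccrn_reactions L"
    then have yW: "y \<in> width_le2_complexes L" "y' \<in> width_le2_complexes L"
      and "cplx_size y = cplx_size y'" by (auto simp: ccrn_reactions_def)
    then have "reaction_vector y y' =
        (count_vector y' - fscale (real (cplx_size y')) (count_vector {#1#})) -
        (count_vector y - fscale (real (cplx_size y)) (count_vector {#1#}))"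
      by (simp add: reaction_vector_eq)
    then show "reaction_vector y y' \<in> fun_vs.span (fusion_vector ` {2..L})"
      using fun_vs.span_diff[OF count_vector_in_span count_vector_in_span] yW by metis
  qed
  show "fun_vs.independent (fusion_vector ` {2..L})"
    by (rule fusion_vectors_independent)
  show "card (fusion_vector ` {2..L}) = L - 1"
    by (simp add: card_image fusion_vectors_independent)
qed

section \<open>The deficiency\<close>

lemma triangle_number_identities:
  fixes L :: nat
  assumes "L \<ge> 2"
  shows "L + L * (L + 1) div 2 - 3 = (L + 1) * (L + 2) div 2 - 4"
    and "int ((L + 1) * (L + 2) div 2 - 4) - int (2 * L - 3) - int (L - 1)
           = int ((L - 1) * (L - 2) div 2)"
proof -
  obtain n where L: "L = n + 2"
    using assms by (metis add.commute le_Suc_ex)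
  have "(L + 1) * (L + 2) div 2 = n * (n + 1) div 2 + (3 * n + 6)"
    unfolding L by (simp add: algebra_simps)
  moreover have "L * (L + 1) div 2 = n * (n + 1) div 2 + (2 * n + 3)"
    unfolding L by (simp add: algebra_simps)
  moreover have "(L - 1) * (L - 2) = n * (n + 1)"
    unfolding L by simp
  ultimately show "L + L * (L + 1) div 2 - 3 = (L + 1) * (L + 2) div 2 - 4"
    and "int ((L + 1) * (L + 2) div 2 - 4) - int (2 * L - 3) - int (L - 1)
           = int ((L - 1) * (L - 2) div 2)"
    using L by simp_all
qed

theorem mainTheorem13:
  fixes L :: nat
  assumes "L \<ge> 2"
  shows "card (ccrn_complexes L) = (L + 1) * (L + 2) div 2 - 4
       \<and> card (ccrn_linkage_classes L) = 2 * L - 3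
       \<and> ccrn_stoich_dim L = L - 1
       \<and> ccrn_deficiency L = int ((L - 1) * (L - 2) div 2)"
proof -
  have complexes: "card (ccrn_complexes L) = (L + 1) * (L + 2) div 2 - 4"
    using card_ccrn_complexes[OF assms] triangle_number_identities(1)[OF assms] by simp
  show ?thesis
    using complexes card_ccrn_linkage_classes[OF assms] ccrn_stoich_dim_eq[OF assms]
      triangle_number_identities(2)[OF assms]
    by (simp add: ccrn_deficiency_def)
qed

end
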